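(* In the adaptive clinching auction for one infinitely divisible good (described in the context), the allocations in the stopping step (I) can be carried out in such a way that, when the auction stops, there is at most one bidder $i$ with final allocation $X_i>0$ and total payment $P_i<B_i$.
   Context: One unit of an infinitely divisible good is sold to $n$ bidders; bidder $i$ reports valuation $v_i$ per unit and budget $B_i>0$; $X_i$ and $P_i$ denote the final allocation and total payment of bidder $i$. The adaptive clinching auction is a process indexed by time $t\ge0$, with price $p(t)$, effective budgets $b_i(t)$, allocations $x_i(t)$, payments $P_i(t)$, and supply $S(t)=1-\sum_ix_i(t)$; initially $p(0)=0$, $x_i(0)=P_i(0)=0$, $b_i(0)=B_i$, $S(0)=1$. Demand $D_i(t)=b_i(t)/p(t)$ and $D_{-i}(t)=\sum_{j\ne i}D_j(t)$. Active set $A(t)=\{j:v_j>p(t),b_j(t)>0\}$, exiting set $E(t)=\{j:v_j=p(t),b_j(t)>0\}$, clinching set $C(t)=\{j\in A(t):S(t)=D_{-j}(t)\}$. With a fixed report-independent ordering of the bidders, the rules (primes are time derivatives; unmentioned quantities are constant) are: (I) if $\sum_{i\in A(t)}D_i(t)\le S(t)$, stop at time $f=t$ and, at unit price $p(t)$ respecting budgets, give each $i\in A(t)$ amount $D_i(t)$ and give the remaining amount $S(t)-\sum_{i\in A(t)}D_i(t)$ to bidders in $E(t)$ (how this remainder is split among $E(t)$ is not otherwise specified); (II) else if $E(t)=\emptyset\ne A(t)$: $p'=1$, and for $i\in C(t)$: $b_i'=-S(t)$, $P_i'=S(t)$, $x_i'=S(t)/p(t)$; (III) else if $E(t)\ne\emptyset\ne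 A(t)$: $p'=0$; for the smallest-index $j\in E(t)$: $b_j'=-1$, $P_j'=x_j'=0$; for $i\in C(t)$: $b_i'=-1$, $P_i'=1$, $x_i'=1/p(t)$. *)

theory Defs
  imports Complex_Main "HOL-Library.Extended_Real"
begin

text \<open>Bidders are 0,...,n-1; the fixed report-independent ordering is the natural
order on indices. p is the price, b i the effective budget, x i the allocation,
P i the payment of bidder i, all as functions of time.\<close>

definition demand :: "real \<Rightarrow> real \<Rightarrow> ereal" where
  "demand bb pp = (if pp = 0 then (if bb > 0 then \<infinity> else 0) else ereal (bb / pp))"

definition remaining_supply :: "nat \<Rightarrow> (nat \<Rightarrow> real \<Rightarrow> real) \<Rightarrow> real \<Rightarrow> real" where
  "remaining_supply n x t = 1 - (\<Sum>i<n. x i t)"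

definition active_set :: "nat \<Rightarrow> (nat \<Rightarrow> real) \<Rightarrow> (real \<Rightarrow> real) \<Rightarrow> (nat \<Rightarrow> real \<Rightarrow> real) \<Rightarrow> real \<Rightarrow> nat set" where
  "active_set n v p b t = {j. j < n \<and> v j > p t \<and> b j t > 0}"

definition exiting_set :: "nat \<Rightarrow> (nat \<Rightarrow> real) \<Rightarrow> (real \<Rightarrow> real) \<Rightarrow> (nat \<Rightarrow> real \<Rightarrow> real) \<Rightarrow> real \<Rightarrow> nat set" where
  "exiting_set n v p b t = {j. j < n \<and> v j = p t \<and> b j t > 0}"

definition clinching_set :: "nat \<Rightarrow> (nat \<Rightarrow> real) \<Rightarrow> (real \<Rightarrow> real) \<Rightarrow> (nat \<Rightarrow> real \<Rightarrow> real) \<Rightarrow> (nat \<Rightarrow> real \<Rightarrow> real) \<Rightarrow> real \<Rightarrow> nat set" where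
  "clinching_set n v p b x t =
     {j \<in> active_set n v p b t.
        ereal (remaining_supply n x t) = (\<Sum>k\<in>{..<n} - {j}. demand (b k t) (p t))}"

definition stop_cond :: "nat \<Rightarrow> (nat \<Rightarrow> real) \<Rightarrow> (real \<Rightarrow> real) \<Rightarrow> (nat \<Rightarrow> real \<Rightarrow> real) \<Rightarrow> (nat \<Rightarrow> real \<Rightarrow> real) \<Rightarrow> real \<Rightarrow> bool" where
  "stop_cond n v p b x t \<longleftrightarrow>
     (\<Sum>i\<in>active_set n v p b t. demand (b i t) (p t)) \<le> ereal (remaining_supply n x t)"

text \<open>The adaptive clinching auction run on the time interval [0,f], stopping at time f.
Time derivatives are right derivatives (the rules may switch at isolated times);
all trajectories are continuous.\<close>
definition clinching_run ::
  "nat \<Rightarrow> (nat \<Rightarrow> real) \<Rightarrow> (nat \<Rightarrow> real) \<Rightarrow> (real \<Rightarrow> real) \<Rightarrow> (nat \<Rightarrow> real \<Rightarrow> real)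
    \<Rightarrow> (nat \<Rightarrow> real \<Rightarrow> real) \<Rightarrow> (nat \<Rightarrow> real \<Rightarrow> real) \<Rightarrow> real \<Rightarrow> bool" where
  "clinching_run n v B p b x P f \<longleftrightarrow>
     0 \<le> f \<and>
     p 0 = 0 \<and> (\<forall>i<n. x i 0 = 0 \<and> P i 0 = 0 \<and> b i 0 = B i) \<and>
     continuous_on {0..f} p \<and>
     (\<forall>i<n. continuous_on {0..f} (b i) \<and> continuous_on {0..f} (x i) \<and> continuous_on {0..f} (P i)) \<and>
     (\<forall>t. 0 \<le> t \<and> t < f \<longrightarrow> \<not> stop_cond n v p b x t) \<and>
     stop_cond n v p b x f \<and>
     (\<forall>t. 0 \<le> t \<and> t < f \<longrightarrow>
        exiting_set n v p b t = {} \<and> active_set n v p b t \<noteq> {} \<longrightarrow>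
          (p has_real_derivative 1) (at_right t) \<and>
          (\<forall>i<n. if i \<in> clinching_set n v p b x t then
                    (b i has_real_derivative - remaining_supply n x t) (at_right t) \<and>
                    (P i has_real_derivative remaining_supply n x t) (at_right t) \<and>
                    (x i has_real_derivative remaining_supply n x t / p t) (at_right t)
                  else
                    (b i has_real_derivative 0) (at_right t) \<and>
                    (P i has_real_derivative 0) (at_right t) \<and>
                    (x i has_real_derivative 0) (at_right t))) \<and>
     (\<forall>t. 0 \<le> t \<and> t < f \<longrightarrow>
        exiting_set n v p b t \<noteq> {} \<and> active_set n v p b t \<noteq> {} \<longrightarrow>
          (p has_real_derivative 0) (at_right t) \<and>
          (\<forall>i<n. if i = Min (exiting_set n v p b t) then
                    (b i has_real_derivative - 1) (at_right t) \<and>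
                    (P i has_real_derivative 0) (at_right t) \<and>
                    (x i has_real_derivative 0) (at_right t)
                  else if i \<in> clinching_set n v p b x t then
                    (b i has_real_derivative - 1) (at_right t) \<and>
                    (P i has_real_derivative 1) (at_right t) \<and>
                    (x i has_real_derivative 1 / p t) (at_right t)
                  else
                    (b i has_real_derivative 0) (at_right t) \<and>
                    (P i has_real_derivative 0) (at_right t) \<and>
                    (x i has_real_derivative 0) (at_right t)))"

text \<open>Final allocation / payment when the split of the remainder among exiting
bidders is given by r (r j is the amount given to bidder j in E(f)).\<close>
definition final_alloc ::
  "nat \<Rightarrow> (nat \<Rightarrow> real) \<Rightarrow> (real \<Rightarrow> real) \<Rightarrow> (nat \<Rightarrow> real \<Rightarrow> real) \<Rightarrow> (nat \<Rightarrow> real \<Rightarrow> real)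
    \<Rightarrow> real \<Rightarrow> (nat \<Rightarrow> real) \<Rightarrow> nat \<Rightarrow> real" where
  "final_alloc n v p b x f r i =
     x i f + (if i \<in> active_set n v p b f then b i f / p f else r i)"

definition final_pay ::
  "nat \<Rightarrow> (nat \<Rightarrow> real) \<Rightarrow> (real \<Rightarrow> real) \<Rightarrow> (nat \<Rightarrow> real \<Rightarrow> real) \<Rightarrow> (nat \<Rightarrow> real \<Rightarrow> real)
    \<Rightarrow> real \<Rightarrow> (nat \<Rightarrow> real) \<Rightarrow> nat \<Rightarrow> real" where
  "final_pay n v p b P f r i =
     P i f + p f * (if i \<in> active_set n v p b f then b i f / p f else r i)"

end

theory Submission
  imports Defs "HOL-Analysis.Analysis"
begin

text \<open>
The budget \<open>e\<^sub>i = B\<^sub>i - P\<^sub>i - b\<^sub>i\<close> that bidder \<open>i\<close> has forfeited without paying for it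
grows only while \<open>i\<close> is the first exiting bidder, so it stays zero while \<open>v\<^sub>i > p\<close>. Once a
bidder has clinched, the demand of the others never exceeds the supply again, so a bidder with
\<open>x\<^sub>i > 0\<close> remains active until the end. Consequently at the stopping time every active bidder
has spent its whole budget, every bidder outside \<open>A \<union> E\<close> with \<open>x\<^sub>i > 0\<close> has as well, at most one
exiting bidder (the least one) has lost budget, and if some exiting bidder \<open>s\<close> has clinched
then no exiting bidder has lost budget and the full demands of \<open>E - {s}\<close> fit into the
remainder. Filling the exiting bidders' demands greedily, with \<open>s\<close> last, then leaves at most
one bidder with positive allocation whose budget is not exhausted.
\<close>

section \<open>Monotonicity from right derivatives\<close>

lemma last_time_above:
  fixes g :: "real \<Rightarrow> real"
  assumes "a \<le> b" "continuous_on {a..b} g" "y \<le> g a"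
  obtains s where "a \<le> s" "s \<le> b" "y \<le> g s" "\<And>u. s < u \<Longrightarrow> u \<le> b \<Longrightarrow> g u < y"
proof -
  let ?K = "{t\<in>{a..b}. y \<le> g t}"
  have "?K = {a..b} \<inter> g -` {y..}" by auto
  then have "closed ?K" using continuous_closed_preimage[OF assms(2)] by auto
  moreover have bdd: "bdd_above ?K" by (rule bdd_aboveI[of _ b]) auto
  ultimately have Sup_in: "Sup ?K \<in> ?K" using assms by (intro closed_contains_Sup) auto
  have "g u < y" if "Sup ?K < u" "u \<le> b" for u
    using cSup_upper[OF _ bdd, of u] that Sup_in by force
  with Sup_in show ?thesis using that by auto
qed

lemma right_DERIV_pos_imp_increasing:
  fixes g :: "real \<Rightarrow> real"
  assumes ab: "a \<le> b" and cont: "continuous_on {a..b} g"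
    and der: "\<And>t. a < t \<Longrightarrow> t < b \<Longrightarrow> \<exists>d>0. (g has_real_derivative d) (at_right t)"
  shows "g a \<le> g b"
proof (rule ccontr)
  assume "\<not> g a \<le> g b"
  define y where "y = (g a + g b) / 2"
  have ya: "y < g a" and yb: "g b < y" and ab': "a < b"
    using \<open>\<not> g a \<le> g b\<close> ab by (auto simp: y_def less_le)
  obtain s where s: "a \<le> s" "s \<le> b" "y \<le> g s" and after: "\<And>u. s < u \<Longrightarrow> u \<le> b \<Longrightarrow> g u < y"
    using last_time_above[OF ab cont less_imp_le[OF ya]] by blast
  have sb: "s < b" using s yb by (cases "s = b") auto
  have "a < s"
  proof (rule ccontr)
    assume "\<not> a < s"
    have "(g \<longlongrightarrow> g a) (at a within {a..b})" using cont ab by (simp add: continuous_on_def)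
    then have "(g \<longlongrightarrow> g a) (at_right a)" using ab' by (simp add: at_within_Icc_at_right)
    then have "\<forall>\<^sub>F t in at_right a. y < g t" using ya by (rule order_tendstoD)
    moreover have "\<forall>\<^sub>F t in at_right a. t < b \<and> a < t"
      using ab' eventually_at_right_less by (auto simp: eventually_at_right_field eventually_conj_iff)
    ultimately obtain t where "a < t" "y < g t" "t < b"
      using eventually_happens'[OF trivial_limit_at_right_real] eventually_conj by blast
    then show False using after[of t] \<open>\<not> a < s\<close> s by auto
  qed
  then obtain d where "d > 0" "(g has_real_derivative d) (at_right s)" using der sb by blast
  then have "\<forall>\<^sub>F u in at_right s. 0 < (g u - g s) / (u - s)"
    by (auto intro: order_tendstoD simp: has_field_derivative_iff)
  moreover have "\<forall>\<^sub>F u in at_right s. u < b \<and> s < u"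
    using sb eventually_at_right_less by (auto simp: eventually_at_right_field eventually_conj_iff)
  ultimately obtain u where "0 < (g u - g s) / (u - s)" "u < b" "s < u"
    using eventually_happens'[OF trivial_limit_at_right_real] eventually_conj by blast
  then show False using after[of u] s by (simp add: zero_less_divide_iff)
qed

lemma right_DERIV_nonneg_imp_increasing:
  fixes g :: "real \<Rightarrow> real"
  assumes ab: "a \<le> b" and cont: "continuous_on {a..b} g"
    and der: "\<And>t. a < t \<Longrightarrow> t < b \<Longrightarrow> \<exists>d\<ge>0. (g has_real_derivative d) (at_right t)"
  shows "g a \<le> g b"
proof (rule field_le_epsilon)
  fix \<epsilon> :: real assume "0 < \<epsilon>"
  define k where "k = \<epsilon> / (b - a + 1)"
  have k: "k > 0" using \<open>0 < \<epsilon>\<close> ab by (simp add: k_def)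
  have "(\<lambda>t. g t + k * t) a \<le> (\<lambda>t. g t + k * t) b"
  proof (rule right_DERIV_pos_imp_increasing[OF ab])
    show "continuous_on {a..b} (\<lambda>t. g t + k * t)" using cont by (intro continuous_intros)
    fix t assume "a < t" "t < b"
    then obtain d where "d \<ge> 0" "(g has_real_derivative d) (at_right t)" using der by blast
    then have "((\<lambda>t. g t + k * t) has_real_derivative d + k) (at_right t)"
      by (auto intro!: derivative_eq_intros)
    then show "\<exists>d>0. ((\<lambda>t. g t + k * t) has_real_derivative d) (at_right t)"
      using \<open>d \<ge> 0\<close> k by (intro exI[of _ "d + k"]) auto
  qed
  moreover have "k * (b - a) \<le> \<epsilon>"
    using \<open>0 < \<epsilon>\<close> ab by (simp add: k_def field_simps)
  ultimately show "g a \<le> g b + \<epsilon>" by (simp add: algebra_simps)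
qed

lemma right_DERIV_nonpos_imp_decreasing:
  fixes g :: "real \<Rightarrow> real"
  assumes ab: "a \<le> b" and cont: "continuous_on {a..b} g"
    and der: "\<And>t. a < t \<Longrightarrow> t < b \<Longrightarrow> \<exists>d\<le>0. (g has_real_derivative d) (at_right t)"
  shows "g b \<le> g a"
proof -
  have "(\<lambda>t. - g t) a \<le> (\<lambda>t. - g t) b"
  proof (rule right_DERIV_nonneg_imp_increasing[OF ab])
    show "continuous_on {a..b} (\<lambda>t. - g t)" using cont by (intro continuous_intros)
    fix t assume "a < t" "t < b"
    then obtain d where "d \<le> 0" "(g has_real_derivative d) (at_right t)" using der by blast
    then show "\<exists>d\<ge>0. ((\<lambda>t. - g t) has_real_derivative d) (at_right t)"
      by (intro exI[of _ "- d"]) (auto intro!: derivative_eq_intros)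
  qed
  then show ?thesis by simp
qed

lemma right_DERIV_zero_imp_const:
  fixes g :: "real \<Rightarrow> real"
  assumes "a \<le> b" "continuous_on {a..b} g"
    and "\<And>t. a < t \<Longrightarrow> t < b \<Longrightarrow> (g has_real_derivative 0) (at_right t)"
  shows "g b = g a"
  using right_DERIV_nonneg_imp_increasing[OF assms(1,2)]
    right_DERIV_nonpos_imp_decreasing[OF assms(1,2)] assms(3)
  by (metis order.refl antisym)

lemma right_DERIV_nonneg_when_negative_imp_nonneg:
  fixes g :: "real \<Rightarrow> real"
  assumes ab: "a \<le> b" and cont: "continuous_on {a..b} g" and "0 \<le> g a"
    and der: "\<And>t. a < t \<Longrightarrow> t < b \<Longrightarrow> g t < 0 \<Longrightarrow> \<exists>d\<ge>0. (g has_real_derivative d) (at_right t)"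
  shows "0 \<le> g b"
proof -
  obtain s where s: "a \<le> s" "s \<le> b" "0 \<le> g s" and after: "\<And>u. s < u \<Longrightarrow> u \<le> b \<Longrightarrow> g u < 0"
    using last_time_above[OF ab cont \<open>0 \<le> g a\<close>] by blast
  have "g s \<le> g b"
  proof (rule right_DERIV_nonneg_imp_increasing[OF \<open>s \<le> b\<close>])
    show "continuous_on {s..b} g" using continuous_on_subset[OF cont] s by auto
  qed (use der after s in auto)
  with s show ?thesis by simp
qed

section \<open>Filling capacities\<close>

lemma greedy_fill:
  fixes c :: "'a \<Rightarrow> real"
  assumes "finite E" "\<And>j. j \<in> E \<Longrightarrow> 0 \<le> c j" "0 \<le> R" "R \<le> sum c E"
  shows "\<exists>r. (\<forall>j. 0 \<le> r j) \<and> (\<forall>j. j \<notin> E \<longrightarrow> r j = 0) \<and> (\<forall>j\<in>E. r j \<le> c j) \<and> sum r E = R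
           \<and> (\<forall>j\<in>E. \<forall>k\<in>E. 0 < r j \<and> r j < c j \<and> 0 < r k \<and> r k < c k \<longrightarrow> j = k)"
  using assms
proof (induction E arbitrary: R rule: finite_induct)
  case empty
  then show ?case by (intro exI[of _ "\<lambda>_. 0"]) auto
next
  case (insert a F)
  show ?case
  proof (cases "R \<le> sum c F")
    case True
    with insert obtain r where "(\<forall>j. 0 \<le> r j) \<and> (\<forall>j. j \<notin> F \<longrightarrow> r j = 0) \<and> (\<forall>j\<in>F. r j \<le> c j)
        \<and> sum r F = R \<and> (\<forall>j\<in>F. \<forall>k\<in>F. 0 < r j \<and> r j < c j \<and> 0 < r k \<and> r k < c k \<longrightarrow> j = k)"
      by auto
    with insert show ?thesis by (intro exI[of _ r]) auto
  next
    case False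
    define r where "r j = (if j \<in> F then c j else if j = a then R - sum c F else 0)" for j
    have "sum r F = sum c F" by (rule sum.cong) (auto simp: r_def)
    moreover have "0 \<le> sum c F" using insert by (intro sum_nonneg) auto
    ultimately show ?thesis using False insert by (intro exI[of _ r]) (auto simp: r_def)
  qed
qed

lemma greedy_fill_last:
  fixes c :: "'a \<Rightarrow> real"
  assumes fin: "finite E" and c: "\<And>j. j \<in> E \<Longrightarrow> 0 \<le> c j" and "0 \<le> R" "R \<le> sum c E"
  obtains r where "\<And>j. 0 \<le> r j" "\<And>j. j \<notin> E \<Longrightarrow> r j = 0" "\<And>j. j \<in> E \<Longrightarrow> r j \<le> c j"
    "sum r E = R"
    "\<And>j k. \<lbrakk>j \<in> E; k \<in> E; 0 < r j; r j < c j; 0 < r k; r k < c k\<rbrakk> \<Longrightarrow> j = k"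
    "0 < r s \<Longrightarrow> \<forall>j\<in>E - {s}. r j = c j"
    "sum c (E - {s}) \<le> R \<Longrightarrow> \<forall>j\<in>E - {s}. r j = c j"
proof (cases "sum c (E - {s}) \<le> R")
  case True
  define r where "r j = (if j \<in> E - {s} then c j else if j = s then R - sum c (E - {s}) else 0)" for j
  have sum_rest: "sum r (E - {s}) = sum c (E - {s})" by (rule sum.cong) (auto simp: r_def)
  have last_le: "R - sum c (E - {s}) \<le> c s" if "s \<in> E"
    using \<open>R \<le> sum c E\<close> sum.remove[OF fin that, of c] by simp
  show ?thesis
  proof (rule that)
    show "sum r E = R"
    proof (cases "s \<in> E")
      case True
      then show ?thesis using sum.remove[OF fin True, of r] sum_rest by (simp add: r_def)
    next
      case False
      then show ?thesis using sum_rest True \<open>R \<le> sum c E\<close> by simp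
    qed
  qed (use True c last_le \<open>R \<le> sum c E\<close> in \<open>auto simp: r_def split: if_splits\<close>)
next
  case False
  have "\<exists>r. (\<forall>j. 0 \<le> r j) \<and> (\<forall>j. j \<notin> E - {s} \<longrightarrow> r j = 0) \<and> (\<forall>j\<in>E - {s}. r j \<le> c j)
      \<and> sum r (E - {s}) = R
      \<and> (\<forall>j\<in>E - {s}. \<forall>k\<in>E - {s}. 0 < r j \<and> r j < c j \<and> 0 < r k \<and> r k < c k \<longrightarrow> j = k)"
    using fin c \<open>0 \<le> R\<close> False by (intro greedy_fill) auto
  then obtain r where r0: "\<And>j. 0 \<le> r j" and r_out: "\<And>j. j \<notin> E - {s} \<Longrightarrow> r j = 0"
    and r_le: "\<And>j. j \<in> E - {s} \<Longrightarrow> r j \<le> c j" and r_sum: "sum r (E - {s}) = R"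
    and r_partial: "\<And>j k. \<lbrakk>j \<in> E - {s}; k \<in> E - {s}; 0 < r j; r j < c j; 0 < r k; r k < c k\<rbrakk> \<Longrightarrow> j = k"
    by blast
  have "r s = 0" using r_out by blast
  show ?thesis
  proof (rule that[of r])
    have "sum r (E - {s}) = sum r E" using r_out fin by (intro sum.mono_neutral_left) auto
    then show "sum r E = R" using r_sum by simp
  next
    fix j assume "j \<in> E"
    then show "r j \<le> c j" using r_le c \<open>r s = 0\<close> by (cases "j = s") auto
  next
    fix j k assume "j \<in> E" "k \<in> E" "0 < r j" "r j < c j" "0 < r k" "r k < c k"
    moreover have "j \<noteq> s" "k \<noteq> s" using calculation \<open>r s = 0\<close> by auto
    ultimately show "j = k" using r_partial by blast
  qed (use r0 r_out \<open>r s = 0\<close> False in simp_all)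
qed

lemma demand_nonneg: "0 \<le> bb \<Longrightarrow> 0 \<le> pp \<Longrightarrow> 0 \<le> demand bb pp"
  by (auto simp: demand_def)

lemma sum_demand_pos_price: "0 < pp \<Longrightarrow> (\<Sum>k\<in>K. demand (bb k) pp) = ereal (\<Sum>k\<in>K. bb k / pp)"
  by (simp add: demand_def)

lemma sum_demand_zero_price_infinite:
  assumes "finite K" "i \<in> K" "0 < bb i"
  shows "(\<Sum>k\<in>K. demand (bb k) 0) = \<infinity>"
proof -
  have "demand (bb i) 0 = \<infinity>" using assms(3) by (simp add: demand_def)
  with assms(1,2) show ?thesis unfolding sum_Pinfty by (intro conjI bexI[of _ i])
qed

lemma sum_demand_zero_price_cases: "(\<Sum>k\<in>K. demand (bb k) 0) \<in> {0, \<infinity>}"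
proof (cases "finite K \<and> (\<exists>k\<in>K. 0 < bb k)")
  case True
  then obtain k where "finite K" "k \<in> K" "0 < bb k" by blast
  then show ?thesis by (simp add: sum_demand_zero_price_infinite)
next
  case False
  then have "infinite K \<or> (\<forall>k\<in>K. demand (bb k) 0 = 0)"
    by (auto simp: demand_def not_less)
  then show ?thesis by (auto simp: sum.neutral)
qed

section \<open>The auction before the stopping time\<close>

definition remainder_split ::
  "nat \<Rightarrow> (nat \<Rightarrow> real) \<Rightarrow> (real \<Rightarrow> real) \<Rightarrow> (nat \<Rightarrow> real \<Rightarrow> real) \<Rightarrow> (nat \<Rightarrow> real \<Rightarrow> real)
    \<Rightarrow> real \<Rightarrow> (nat \<Rightarrow> real) \<Rightarrow> bool" where
  "remainder_split n v p b x f r \<longleftrightarrow>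
     (\<forall>j. r j \<ge> 0) \<and>
     (\<forall>j. j \<notin> exiting_set n v p b f \<longrightarrow> r j = 0) \<and>
     (\<forall>j\<in>exiting_set n v p b f. p f * r j \<le> b j f) \<and>
     (\<Sum>j\<in>exiting_set n v p b f. r j)
        = remaining_supply n x f - (\<Sum>i\<in>active_set n v p b f. b i f / p f)"

definition unsaturated_winners ::
  "nat \<Rightarrow> (nat \<Rightarrow> real) \<Rightarrow> (nat \<Rightarrow> real) \<Rightarrow> (real \<Rightarrow> real) \<Rightarrow> (nat \<Rightarrow> real \<Rightarrow> real)
    \<Rightarrow> (nat \<Rightarrow> real \<Rightarrow> real) \<Rightarrow> (nat \<Rightarrow> real \<Rightarrow> real) \<Rightarrow> real \<Rightarrow> (nat \<Rightarrow> real) \<Rightarrow> nat set" where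
  "unsaturated_winners n v B p b x P f r =
     {i. i < n \<and> final_alloc n v p b x f r i > 0 \<and> final_pay n v p b P f r i < B i}"

text \<open>On \<open>[0, c]\<close> the active set is nonempty, so rules (II) and (III) determine all right
  derivatives there; the stopping time itself is the case \<open>c = f\<close>.\<close>

locale clinching_prefix =
  fixes n :: nat and v B :: "nat \<Rightarrow> real" and p :: "real \<Rightarrow> real"
    and b x P :: "nat \<Rightarrow> real \<Rightarrow> real" and f c :: real
  assumes budget_pos: "\<And>i. i < n \<Longrightarrow> 0 < B i"
    and run: "clinching_run n v B p b x P f"
    and c_le_f: "c \<le> f"
    and active_before: "\<And>t. 0 \<le> t \<Longrightarrow> t < c \<Longrightarrow> active_set n v p b t \<noteq> {}"
begin

abbreviation "S t \<equiv> remaining_supply n x t"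
abbreviation "A t \<equiv> active_set n v p b t"
abbreviation "E t \<equiv> exiting_set n v p b t"
abbreviation "C t \<equiv> clinching_set n v p b x t"

lemma price_0: "p 0 = 0"
  and initial: "\<And>i. i < n \<Longrightarrow> x i 0 = 0 \<and> P i 0 = 0 \<and> b i 0 = B i"
  and continuous_run: "continuous_on {0..f} p"
    "\<And>i. i < n \<Longrightarrow> continuous_on {0..f} (b i)"
    "\<And>i. i < n \<Longrightarrow> continuous_on {0..f} (x i)"
    "\<And>i. i < n \<Longrightarrow> continuous_on {0..f} (P i)"
  and not_stopped: "\<And>t. 0 \<le> t \<Longrightarrow> t < f \<Longrightarrow> \<not> stop_cond n v p b x t"
  and stopped: "stop_cond n v p b x f"
  using run unfolding clinching_run_def by auto

lemma rule_II: "0 \<le> t \<Longrightarrow> t < f \<Longrightarrow> E t = {} \<Longrightarrow> A t \<noteq> {} \<Longrightarrow>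
    (p has_real_derivative 1) (at_right t) \<and>
    (\<forall>i<n. if i \<in> C t then
              (b i has_real_derivative - S t) (at_right t) \<and>
              (P i has_real_derivative S t) (at_right t) \<and>
              (x i has_real_derivative S t / p t) (at_right t)
            else
              (b i has_real_derivative 0) (at_right t) \<and>
              (P i has_real_derivative 0) (at_right t) \<and>
              (x i has_real_derivative 0) (at_right t))"
  using run unfolding clinching_run_def by blast

lemma rule_III: "0 \<le> t \<Longrightarrow> t < f \<Longrightarrow> E t \<noteq> {} \<Longrightarrow> A t \<noteq> {} \<Longrightarrow>
    (p has_real_derivative 0) (at_right t) \<and>
    (\<forall>i<n. if i = Min (E t) then
              (b i has_real_derivative - 1) (at_right t) \<and>
              (P i has_real_derivative 0) (at_right t) \<and>
              (x i has_real_derivative 0) (at_right t)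
            else if i \<in> C t then
              (b i has_real_derivative - 1) (at_right t) \<and>
              (P i has_real_derivative 1) (at_right t) \<and>
              (x i has_real_derivative 1 / p t) (at_right t)
            else
              (b i has_real_derivative 0) (at_right t) \<and>
              (P i has_real_derivative 0) (at_right t) \<and>
              (x i has_real_derivative 0) (at_right t))"
  using run unfolding clinching_run_def by blast

definition "price_rate t = (if E t = {} then 1 else (0::real))"

definition "budget_rate i t =
  (if E t = {} then (if i \<in> C t then - S t else 0)
   else if i = Min (E t) then -1 else if i \<in> C t then -1 else 0)"

definition "payment_rate i t =
  (if E t = {} then (if i \<in> C t then S t else 0)
   else if i = Min (E t) then 0 else if i \<in> C t then 1 else 0)"

definition "alloc_rate i t =
  (if E t = {} then (if i \<in> C t then S t / p t else 0)
   else if i = Min (E t) then 0 else if i \<in> C t then 1 / p t else 0)"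

lemma has_price_rate: "0 \<le> t \<Longrightarrow> t < c \<Longrightarrow> (p has_real_derivative price_rate t) (at_right t)"
  using rule_II[of t] rule_III[of t] active_before[of t] c_le_f
  by (cases "E t = {}") (auto simp: price_rate_def)

lemma has_bidder_rates:
  assumes "0 \<le> t" "t < c" "i < n"
  shows "(b i has_real_derivative budget_rate i t) (at_right t) \<and>
    (P i has_real_derivative payment_rate i t) (at_right t) \<and>
    (x i has_real_derivative alloc_rate i t) (at_right t)"
proof -
  have t: "t < f" "A t \<noteq> {}" using assms c_le_f active_before by auto
  show ?thesis
  proof (cases "E t = {}")
    case True
    note rule = rule_II[OF assms(1) t(1) True t(2), THEN conjunct2, rule_format, OF assms(3)]
    show ?thesis
      using rule True by (cases "i \<in> C t") (simp_all add: budget_rate_def payment_rate_def alloc_rate_def)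
  next
    case False
    note rule = rule_III[OF assms(1) t(1) False t(2), THEN conjunct2, rule_format, OF assms(3)]
    show ?thesis
      using rule False by (cases "i = Min (E t)"; cases "i \<in> C t")
        (simp_all add: budget_rate_def payment_rate_def alloc_rate_def)
  qed
qed

lemmas has_budget_rate = has_bidder_rates[THEN conjunct1]
  and has_alloc_rate = has_bidder_rates[THEN conjunct2, THEN conjunct2]

lemma has_supply_rate:
  "0 \<le> t \<Longrightarrow> t < c \<Longrightarrow> ((\<lambda>t. S t) has_real_derivative - (\<Sum>k<n. alloc_rate k t)) (at_right t)"
  unfolding remaining_supply_def by (auto intro!: derivative_eq_intros has_alloc_rate)

lemma finite_exiting: "finite (E t)"
  unfolding exiting_set_def by auto

lemma Min_exiting_in: "E t \<noteq> {} \<Longrightarrow> Min (E t) \<in> E t"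
  using finite_exiting by (rule Min_in)

lemma clinching_subset_active: "C t \<subseteq> A t"
  unfolding clinching_set_def by auto

lemma budget_rate_nonzero_imp_pos: "i < n \<Longrightarrow> budget_rate i t \<noteq> 0 \<Longrightarrow> 0 < b i t"
  using Min_exiting_in[of t] clinching_subset_active[of t] unfolding budget_rate_def
  by (auto simp: active_set_def exiting_set_def split: if_splits)

lemma alloc_rate_nonzero_imp_clinching: "alloc_rate i t \<noteq> 0 \<Longrightarrow> i \<in> C t"
  unfolding alloc_rate_def by (auto split: if_splits)

text \<open>Rule (III) burns the budget of the first exiting bidder without charging it.\<close>

definition "forfeited i t = B i - P i t - b i t"

lemma has_forfeit_rate:
  assumes "0 \<le> t" "t < c" "i < n"
  shows "(forfeited i has_real_derivative (if E t \<noteq> {} \<and> i = Min (E t) then 1 else 0)) (at_right t)"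
proof -
  have "((\<lambda>t. B i - P i t - b i t) has_real_derivative 0 - payment_rate i t - budget_rate i t)
      (at_right t)"
    using has_bidder_rates[OF assms] by (intro derivative_intros) auto
  moreover have "0 - payment_rate i t - budget_rate i t = (if E t \<noteq> {} \<and> i = Min (E t) then 1 else 0)"
    unfolding payment_rate_def budget_rate_def by auto
  ultimately show ?thesis unfolding forfeited_def[abs_def] by simp
qed

lemma continuous_on_prefix: "continuous_on {0..f} g \<Longrightarrow> 0 \<le> u \<Longrightarrow> w \<le> c \<Longrightarrow> continuous_on {u..w} g"
  using c_le_f by (elim continuous_on_subset) auto

lemmas continuous_on_price = continuous_on_prefix[OF continuous_run(1)]
  and continuous_on_budget = continuous_on_prefix[OF continuous_run(2)]
  and continuous_on_alloc = continuous_on_prefix[OF continuous_run(3)]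
  and continuous_on_payment = continuous_on_prefix[OF continuous_run(4)]

lemma continuous_on_supply: "0 \<le> u \<Longrightarrow> w \<le> c \<Longrightarrow> continuous_on {u..w} (\<lambda>t. S t)"
  unfolding remaining_supply_def by (intro continuous_intros continuous_on_alloc) auto

lemma continuous_on_forfeited: "i < n \<Longrightarrow> 0 \<le> u \<Longrightarrow> w \<le> c \<Longrightarrow> continuous_on {u..w} (forfeited i)"
  unfolding forfeited_def
  by (intro continuous_intros continuous_on_payment continuous_on_budget) auto

lemma price_mono: "0 \<le> u \<Longrightarrow> u \<le> w \<Longrightarrow> w \<le> c \<Longrightarrow> p u \<le> p w"
  by (rule right_DERIV_nonneg_imp_increasing[OF _ continuous_on_price])
    (auto intro!: exI[of _ "price_rate _"] has_price_rate simp: price_rate_def)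

lemma price_nonneg: "0 \<le> t \<Longrightarrow> t \<le> c \<Longrightarrow> 0 \<le> p t"
  using price_mono[of 0 t] price_0 by simp

lemma forfeited_mono:
  assumes "i < n" "0 \<le> u" "u \<le> w" "w \<le> c"
  shows "forfeited i u \<le> forfeited i w"
proof (rule right_DERIV_nonneg_imp_increasing[OF _ continuous_on_forfeited])
  fix t assume "u < t" "t < w"
  then show "\<exists>d\<ge>0. (forfeited i has_real_derivative d) (at_right t)"
    using assms has_forfeit_rate[of t i] by (intro exI[of _ "if E t \<noteq> {} \<and> i = Min (E t) then 1 else 0"]) auto
qed (use assms in auto)

lemma forfeited_nonneg: "i < n \<Longrightarrow> 0 \<le> t \<Longrightarrow> t \<le> c \<Longrightarrow> 0 \<le> forfeited i t"
  using forfeited_mono[of i 0 t] initial[of i] by (simp add: forfeited_def)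

lemma budget_nonneg:
  assumes "i < n" "0 \<le> t" "t \<le> c"
  shows "0 \<le> b i t"
proof (rule right_DERIV_nonneg_when_negative_imp_nonneg[of 0 t "b i"])
  show "continuous_on {0..t} (b i)" using assms by (intro continuous_on_budget) auto
  show "0 \<le> b i 0" using initial[of i] budget_pos[of i] assms by simp
  fix u assume u: "0 < u" "u < t" "b i u < 0"
  then have "budget_rate i u = 0" using budget_rate_nonzero_imp_pos[of i u] assms by force
  then show "\<exists>d\<ge>0. (b i has_real_derivative d) (at_right u)"
    using has_budget_rate[of u i] u assms by auto
qed (use assms in auto)

lemma supply_nonneg:
  assumes "0 \<le> t" "t \<le> c"
  shows "0 \<le> S t"
proof (rule right_DERIV_nonneg_when_negative_imp_nonneg[of 0 t "\<lambda>t. S t"])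
  show "continuous_on {0..t} (\<lambda>t. S t)" using assms by (intro continuous_on_supply) auto
  show "0 \<le> S 0" using initial by (simp add: remaining_supply_def)
  fix u assume u: "0 < u" "u < t" "S u < 0"
  have "alloc_rate k u = 0" if "k < n" for k
  proof (rule ccontr)
    assume "alloc_rate k u \<noteq> 0"
    then have "ereal (S u) = (\<Sum>j\<in>{..<n} - {k}. demand (b j u) (p u))"
      using alloc_rate_nonzero_imp_clinching unfolding clinching_set_def by blast
    moreover have "0 \<le> (\<Sum>j\<in>{..<n} - {k}. demand (b j u) (p u))"
      using u assms by (intro sum_nonneg demand_nonneg budget_nonneg price_nonneg) auto
    ultimately have "0 \<le> ereal (S u)" by simp
    then show False using u by simp
  qed
  then show "\<exists>d\<ge>0. ((\<lambda>t. S t) has_real_derivative d) (at_right u)"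
    using has_supply_rate[of u] u assms by (intro exI[of _ 0]) auto
qed (use assms in auto)

lemma alloc_rate_nonneg: "0 \<le> t \<Longrightarrow> t \<le> c \<Longrightarrow> 0 \<le> alloc_rate i t"
  using supply_nonneg[of t] price_nonneg[of t] unfolding alloc_rate_def by auto

lemma budget_rate_nonpos: "0 \<le> t \<Longrightarrow> t \<le> c \<Longrightarrow> budget_rate i t \<le> 0"
  using supply_nonneg[of t] unfolding budget_rate_def by auto

lemma alloc_mono:
  assumes "i < n" "0 \<le> u" "u \<le> w" "w \<le> c"
  shows "x i u \<le> x i w"
proof (rule right_DERIV_nonneg_imp_increasing[OF _ continuous_on_alloc])
  fix t assume "u < t" "t < w"
  then show "\<exists>d\<ge>0. (x i has_real_derivative d) (at_right t)"
    using assms by (intro exI[of _ "alloc_rate i t"]) (auto intro!: has_alloc_rate alloc_rate_nonneg)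
qed (use assms in auto)

lemma alloc_nonneg: "i < n \<Longrightarrow> 0 \<le> t \<Longrightarrow> t \<le> c \<Longrightarrow> 0 \<le> x i t"
  using alloc_mono[of i 0 t] initial[of i] by auto

lemma budget_antimono:
  assumes "i < n" "0 \<le> u" "u \<le> w" "w \<le> c"
  shows "b i w \<le> b i u"
proof (rule right_DERIV_nonpos_imp_decreasing[OF _ continuous_on_budget])
  fix t assume "u < t" "t < w"
  then show "\<exists>d\<le>0. (b i has_real_derivative d) (at_right t)"
    using assms by (intro exI[of _ "budget_rate i t"]) (auto intro!: has_budget_rate budget_rate_nonpos)
qed (use assms in auto)

lemma alloc_pos_imp_price_pos:
  assumes "i < n" "0 \<le> t" "t \<le> c" "0 < x i t"
  shows "0 < p t"
proof (rule ccontr)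
  assume "\<not> 0 < p t"
  then have p_zero: "p u = 0" if "0 \<le> u" "u \<le> t" for u
    using price_mono[of u t] price_nonneg[of u] that assms by force
  have "x i t = x i 0"
  proof (rule right_DERIV_zero_imp_const[OF _ continuous_on_alloc])
    fix u assume "0 < u" "u < t"
    then have "alloc_rate i u = 0" using p_zero[of u] by (simp add: alloc_rate_def)
    then show "(x i has_real_derivative 0) (at_right u)"
      using has_alloc_rate[of u i] \<open>0 < u\<close> \<open>u < t\<close> assms by simp
  qed (use assms in auto)
  then show False using initial[of i] assms by auto
qed

lemma forfeited_zero_while_valued:
  assumes "i < n" "0 \<le> t" "t \<le> c" "p t < v i"
  shows "forfeited i t = 0"
proof -
  have "forfeited i t = forfeited i 0"
  proof (rule right_DERIV_zero_imp_const[OF _ continuous_on_forfeited])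
    fix u assume "0 < u" "u < t"
    then have "p u < v i" using price_mono[of u t] assms by simp
    then have "i \<notin> E u" by (auto simp: exiting_set_def)
    then have rate: "(if E u \<noteq> {} \<and> i = Min (E u) then 1 else 0) = (0::real)"
      using Min_exiting_in[of u] by (intro if_not_P) auto
    show "(forfeited i has_real_derivative 0) (at_right u)"
      using has_forfeit_rate[of u i, unfolded rate] \<open>0 < u\<close> \<open>u < t\<close> assms by simp
  qed (use assms in auto)
  then show ?thesis using initial[of i] assms by (simp add: forfeited_def)
qed

text \<open>\<open>others_excess i t = p(t) (D\<^sub>-\<^sub>i(t) - S(t))\<close>, which vanishes while \<open>i\<close> clinches.\<close>

definition "others_excess i t = (\<Sum>k\<in>{..<n} - {i}. b k t) - p t * S t"

definition "others_excess_rate i t =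
  (\<Sum>k\<in>{..<n} - {i}. budget_rate k t) - (price_rate t * S t - (\<Sum>k<n. alloc_rate k t) * p t)"

lemma has_others_excess_rate:
  "0 \<le> t \<Longrightarrow> t < c \<Longrightarrow> (others_excess i has_real_derivative others_excess_rate i t) (at_right t)"
  unfolding others_excess_def[abs_def] others_excess_rate_def
  by (auto intro!: derivative_eq_intros has_budget_rate has_price_rate has_supply_rate)

lemma continuous_on_others_excess: "0 \<le> u \<Longrightarrow> w \<le> c \<Longrightarrow> continuous_on {u..w} (others_excess i)"
  unfolding others_excess_def[abs_def]
  by (intro continuous_intros continuous_on_supply continuous_on_price continuous_on_budget) auto

lemma clinching_imp_others_excess_zero:
  assumes "0 < p t" "i \<in> C t"
  shows "others_excess i t = 0"
proof -
  have "ereal (S t) = (\<Sum>k\<in>{..<n} - {i}. demand (b k t) (p t))"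
    using assms unfolding clinching_set_def by auto
  also have "\<dots> = ereal ((\<Sum>k\<in>{..<n} - {i}. b k t) / p t)"
    using assms by (simp add: sum_demand_pos_price sum_divide_distrib)
  finally show ?thesis using assms by (simp add: others_excess_def field_simps)
qed

lemma others_excess_rate_nonpos:
  assumes "0 \<le> t" "t < c" "0 < p t" "i < n" "i \<notin> C t"
  shows "others_excess_rate i t \<le> 0"
proof -
  have "alloc_rate i t = 0" using alloc_rate_nonzero_imp_clinching assms by blast
  then have "(\<Sum>k<n. alloc_rate k t) = (\<Sum>k\<in>{..<n} - {i}. alloc_rate k t)"
    using assms by (simp add: sum.remove)
  then have "others_excess_rate i t
      = (\<Sum>k\<in>{..<n} - {i}. budget_rate k t + p t * alloc_rate k t) - price_rate t * S t"
    by (simp add: others_excess_rate_def sum.distrib sum_distrib_left algebra_simps)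
  also have "\<dots> \<le> 0 - 0"
  proof (rule diff_mono)
    \<comment> \<open>a clinching bidder's budget drops at the rate at which it pays for its allocation\<close>
    show "(\<Sum>k\<in>{..<n} - {i}. budget_rate k t + p t * alloc_rate k t) \<le> 0"
      by (rule sum_nonpos) (use assms in \<open>auto simp: budget_rate_def alloc_rate_def\<close>)
    show "0 \<le> price_rate t * S t" using supply_nonneg[of t] assms by (auto simp: price_rate_def)
  qed
  finally show ?thesis by simp
qed

text \<open>Once \<open>i\<close> has clinched, \<open>D\<^sub>-\<^sub>i \<le> S\<close> persists: it can only fail on an interval where \<open>i\<close>
  does not clinch, and there \<open>others_excess i\<close> does not increase.\<close>

lemma alloc_pos_imp_others_excess_nonpos:
  assumes i: "i < n" and t: "0 \<le> t" "t \<le> c" and "0 < x i t"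
  shows "others_excess i t \<le> 0"
proof -
  have "continuous_on {0..t} (\<lambda>u. - min (x i u) (others_excess i u))"
    using i t by (intro continuous_intros continuous_on_alloc continuous_on_others_excess) auto
  then obtain s where s: "0 \<le> s" "s \<le> t" "min (x i s) (others_excess i s) \<le> 0"
    and after: "\<And>u. s < u \<Longrightarrow> u \<le> t \<Longrightarrow> 0 < x i u \<and> 0 < others_excess i u"
    using last_time_above[OF t(1), of "\<lambda>u. - min (x i u) (others_excess i u)" 0] initial[OF i]
    by (smt (verit))
  have not_clinching: "0 < p u" "i \<notin> C u" if "s < u" "u < t" for u
    using after[of u] that alloc_pos_imp_price_pos[of i u] clinching_imp_others_excess_zero[of u i] i s t
    by auto
  have "x i t = x i s"
  proof (rule right_DERIV_zero_imp_const[OF _ continuous_on_alloc])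
    fix u assume "s < u" "u < t"
    then show "(x i has_real_derivative 0) (at_right u)"
      using has_alloc_rate[of u i] alloc_rate_nonzero_imp_clinching not_clinching s t i by force
  qed (use s t i in auto)
  then have "others_excess i s \<le> 0" using s \<open>0 < x i t\<close> by auto
  moreover have "others_excess i t \<le> others_excess i s"
  proof (rule right_DERIV_nonpos_imp_decreasing[OF _ continuous_on_others_excess])
    fix u assume "s < u" "u < t"
    then show "\<exists>d\<le>0. (others_excess i has_real_derivative d) (at_right u)"
      using s t i not_clinching[of u]
      by (intro exI[of _ "others_excess_rate i u"]) (auto intro!: has_others_excess_rate others_excess_rate_nonpos)
  qed (use s t in auto)
  ultimately show ?thesis by simp
qed

lemma alloc_pos_imp_active:
  assumes i: "i < n" and t: "0 \<le> t" "t < c" and "0 < x i t"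
  shows "i \<in> A t"
proof (rule ccontr)
  assume "i \<notin> A t"
  have pt: "0 < p t" using alloc_pos_imp_price_pos[of i t] assms by auto
  have "(\<Sum>k\<in>A t. b k t / p t) \<le> (\<Sum>k\<in>{..<n} - {i}. b k t / p t)"
  proof (rule sum_mono2)
    show "A t \<subseteq> {..<n} - {i}" using \<open>i \<notin> A t\<close> by (auto simp: active_set_def)
    fix k assume "k \<in> {..<n} - {i} - A t"
    then show "0 \<le> b k t / p t" using budget_nonneg[of k t] pt t by simp
  qed simp
  also have "\<dots> = (\<Sum>k\<in>{..<n} - {i}. b k t) / p t" by (simp add: sum_divide_distrib)
  also have "\<dots> \<le> S t"
    using alloc_pos_imp_others_excess_nonpos[of i t] assms pt
    by (simp add: others_excess_def divide_le_eq mult.commute)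
  finally have "stop_cond n v p b x t"
    unfolding stop_cond_def sum_demand_pos_price[OF pt] by simp
  then show False using not_stopped[of t] t c_le_f by auto
qed

lemma clinching_empty_at_price_zero:
  assumes "0 \<le> t" "t \<le> c" "p t = 0"
  shows "C t = {}"
proof -
  have "x k t = 0" if "k < n" for k
    using alloc_nonneg[of k t] alloc_pos_imp_price_pos[of k t] that assms by force
  then have "S t = 1" by (simp add: remaining_supply_def)
  then have "ereal (S t) \<noteq> (\<Sum>k\<in>{..<n} - {i}. demand (b k t) (p t))" for i
    using sum_demand_zero_price_cases[of "\<lambda>k. b k t" "{..<n} - {i}"] assms(3) by auto
  then show ?thesis unfolding clinching_set_def by auto
qed

end

text \<open>At the first time \<open>t\<^sub>0\<close> with empty active set the supply is still nonnegative, so the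
  auction would have stopped at \<open>t\<^sub>0\<close>.\<close>

lemma active_set_nonempty_before_stop:
  assumes budget_pos: "\<And>i. i < n \<Longrightarrow> 0 < B i" and run: "clinching_run n v B p b x P f"
    and t: "0 \<le> t" "t < f"
  shows "active_set n v p b t \<noteq> {}"
proof
  assume "active_set n v p b t = {}"
  define Z where "Z = {u\<in>{0..f}. active_set n v p b u = {}}"
  have Z_eq: "Z = {0..f} \<inter> (\<Inter>j\<in>{..<n}. ({0..f} \<inter> p -` {v j..}) \<union> ({0..f} \<inter> b j -` {..0}))"
    by (auto simp: Z_def active_set_def not_less) (meson not_le)
  have "closed Z" unfolding Z_eq using run unfolding clinching_run_def
    by (intro closed_Int closed_INT closed_Un ballI continuous_closed_preimage) auto
  moreover have "t \<in> Z" using t \<open>active_set n v p b t = {}\<close> by (simp add: Z_def)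
  moreover have bdd: "bdd_below Z" by (rule bdd_belowI[of _ 0]) (auto simp: Z_def)
  ultimately have "Inf Z \<in> Z" "Inf Z \<le> t" using closed_contains_Inf cInf_lower by blast+
  define t0 where "t0 = Inf Z"
  have t0: "0 \<le> t0" "t0 < f" "active_set n v p b t0 = {}"
    using \<open>Inf Z \<in> Z\<close> \<open>Inf Z \<le> t\<close> t by (auto simp: Z_def t0_def)
  interpret clinching_prefix n v B p b x P f t0
  proof
    fix u assume "0 \<le> u" "u < t0"
    then show "active_set n v p b u \<noteq> {}"
      using cInf_lower[OF _ bdd, of u] t0 by (force simp: Z_def t0_def)
  qed (use budget_pos run t0 in auto)
  have "stop_cond n v p b x t0" using supply_nonneg[of t0] t0 by (simp add: stop_cond_def)
  then show False using not_stopped[of t0] t0 by simp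
qed

section \<open>The auction at the stopping time\<close>

locale clinching_final = clinching_prefix n v B p b x P f f for n v B p b x P f +
  assumes final_pos: "0 < f"
begin

lemma tendsto_at_left_final:
  fixes g :: "real \<Rightarrow> real"
  assumes "continuous_on {0..f} g"
  shows "(g \<longlongrightarrow> g f) (at_left f)"
proof -
  have "(g \<longlongrightarrow> g f) (at f within {0..f})" using assms final_pos unfolding continuous_on_def by auto
  then show ?thesis using at_within_Icc_at_left[OF final_pos] by simp
qed

lemma eventually_before_final: "\<forall>\<^sub>F u in at_left f. 0 \<le> u \<and> u < f"
  using final_pos unfolding eventually_at_left_field by (intro exI[of _ 0]) auto

lemma eventually_gt_before_final:
  fixes g :: "real \<Rightarrow> real"
  assumes "continuous_on {0..f} g" "a < g f"
  shows "\<forall>\<^sub>F u in at_left f. a < g u"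
  using order_tendstoD(1)[OF tendsto_at_left_final[OF assms(1)] assms(2)] .

lemma le_at_final:
  fixes g :: "real \<Rightarrow> real"
  assumes "continuous_on {0..f} g" "\<forall>\<^sub>F u in at_left f. g u \<le> a"
  shows "g f \<le> a"
  using tendsto_upperbound[OF tendsto_at_left_final[OF assms(1)] assms(2) trivial_limit_at_left_real] .

lemma final_price_pos: "0 < p f"
proof (rule ccontr)
  assume "\<not> 0 < p f"
  then have p_zero: "p u = 0" if "0 \<le> u" "u \<le> f" for u
    using price_mono[of u f] price_nonneg[of u] that by force
  show False
  proof (cases "\<exists>i<n. 0 < v i")
    case True
    then obtain i where i: "i < n" "0 < v i" by blast
    have "b i f = b i 0"
    proof (rule right_DERIV_zero_imp_const[OF _ continuous_on_budget])
      fix u assume u: "0 < u" "u < f"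
      then have "i \<notin> E u" "i \<notin> C u"
        using p_zero[of u] i clinching_empty_at_price_zero[of u] by (auto simp: exiting_set_def)
      then have "budget_rate i u = 0" using Min_exiting_in[of u] by (auto simp: budget_rate_def)
      then show "(b i has_real_derivative 0) (at_right u)" using has_budget_rate[of u i] u i by simp
    qed (use i final_pos in auto)
    then have "0 < b i f" using initial[of i] budget_pos[of i] i by simp
    then have "i \<in> A f" using i p_zero[of f] final_pos by (simp add: active_set_def)
    then have "(\<Sum>k\<in>A f. demand (b k f) 0) = \<infinity>"
      using \<open>0 < b i f\<close> by (intro sum_demand_zero_price_infinite) (auto simp: active_set_def)
    then show False using stopped p_zero[of f] final_pos unfolding stop_cond_def by simp
  next
    case False
    then have "A 0 = {}" using price_0 by (auto simp: active_set_def)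
    then show False using active_before[of 0] final_pos by simp
  qed
qed

lemma final_supply_le_valued_demand: "S f \<le> (\<Sum>k\<in>{k. k < n \<and> p f \<le> v k}. b k f / p f)"
proof -
  let ?W = "{k. k < n \<and> p f \<le> v k}"
  have "\<forall>\<^sub>F u in at_left f. \<forall>k\<in>{k. k < n \<and> v k < p f}. v k < p u"
    by (rule eventually_ball_finite) (auto intro: eventually_gt_before_final[OF continuous_run(1)])
  moreover have "\<forall>\<^sub>F u in at_left f. 0 < p u"
    using eventually_gt_before_final[OF continuous_run(1) final_price_pos] .
  ultimately have "\<forall>\<^sub>F u in at_left f. S u \<le> (\<Sum>k\<in>?W. b k u / p u)"
    using eventually_before_final
  proof eventually_elim
    case (elim u)
    then have pu: "0 < p u" and u: "0 \<le> u" "u < f" by auto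
    have "S u < (\<Sum>k\<in>A u. b k u / p u)"
      using not_stopped[OF u] unfolding stop_cond_def sum_demand_pos_price[OF pu] by simp
    also have "\<dots> \<le> (\<Sum>k\<in>?W. b k u / p u)"
    proof (rule sum_mono2)
      show "A u \<subseteq> ?W" using elim by (auto simp: active_set_def not_le[symmetric])
      fix k assume "k \<in> ?W - A u"
      then show "0 \<le> b k u / p u" using budget_nonneg[of k u] pu u by simp
    qed simp
    finally show ?case by simp
  qed
  moreover have "((\<lambda>u. \<Sum>k\<in>?W. b k u / p u) \<longlongrightarrow> (\<Sum>k\<in>?W. b k f / p f)) (at_left f)"
    using final_price_pos
    by (intro tendsto_intros tendsto_at_left_final continuous_run) auto
  ultimately show ?thesis
    using tendsto_at_left_final[OF continuous_on_supply[of 0 f]]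
    by (intro tendsto_le[OF trivial_limit_at_left_real]) auto
qed

lemma final_supply_le_demand: "S f \<le> (\<Sum>k\<in>A f. b k f / p f) + (\<Sum>k\<in>E f. b k f / p f)"
proof -
  let ?W = "{k. k < n \<and> p f \<le> v k}"
  have "(\<Sum>k\<in>?W. b k f / p f) = (\<Sum>k\<in>A f \<union> E f. b k f / p f)"
  proof (rule sum.mono_neutral_right)
    show "A f \<union> E f \<subseteq> ?W" by (auto simp: active_set_def exiting_set_def)
    show "\<forall>i\<in>?W - (A f \<union> E f). b i f / p f = 0"
    proof
      fix i assume "i \<in> ?W - (A f \<union> E f)"
      then have "i < n" "b i f \<le> 0" by (auto simp: active_set_def exiting_set_def less_eq_real_def)
      then show "b i f / p f = 0" using budget_nonneg[of i f] final_pos by simp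
    qed
  qed simp
  also have "\<dots> = (\<Sum>k\<in>A f. b k f / p f) + (\<Sum>k\<in>E f. b k f / p f)"
    by (intro sum.union_disjoint) (auto simp: active_set_def exiting_set_def)
  finally show ?thesis using final_supply_le_valued_demand by simp
qed

lemma final_active_demand_le_supply: "(\<Sum>k\<in>A f. b k f / p f) \<le> S f"
  using stopped unfolding stop_cond_def sum_demand_pos_price[OF final_price_pos] by simp

lemma eventually_price_below_value:
  assumes "i < n" "0 < x i f"
  shows "\<forall>\<^sub>F u in at_left f. p u < v i"
  using eventually_gt_before_final[OF continuous_run(3)[OF assms(1)] assms(2)] eventually_before_final
  by eventually_elim (use alloc_pos_imp_active[OF assms(1)] in \<open>auto simp: active_set_def\<close>)

lemma final_alloc_pos_imp_price_le: "i < n \<Longrightarrow> 0 < x i f \<Longrightarrow> p f \<le> v i"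
  by (rule le_at_final[OF continuous_run(1)])
    (auto elim: eventually_mono[OF eventually_price_below_value])

lemma final_forfeited_zero:
  assumes "i < n" "0 < x i f" "j < n" "v i \<le> v j"
  shows "forfeited j f = 0"
proof -
  have "\<forall>\<^sub>F u in at_left f. forfeited j u \<le> 0"
    using eventually_price_below_value[OF assms(1,2)] eventually_before_final
    by eventually_elim (use forfeited_zero_while_valued[of j] assms in auto)
  then have "forfeited j f \<le> 0"
    using continuous_on_forfeited[OF assms(3) order_refl order_refl] le_at_final by blast
  then show ?thesis using forfeited_nonneg[of j f] assms final_pos by simp
qed

lemma active_pays_budget:
  assumes "i \<in> A f"
  shows "final_pay n v p b P f r i = B i"
proof -
  have "forfeited i f = 0"
    using assms final_pos by (intro forfeited_zero_while_valued) (auto simp: active_set_def)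
  then show ?thesis
    using assms final_price_pos by (simp add: final_pay_def forfeited_def)
qed

lemma inactive_winner_pays_budget:
  assumes "i < n" "i \<notin> A f" "i \<notin> E f" "0 < x i f"
  shows "P i f = B i"
proof -
  have "b i f = 0"
    using final_alloc_pos_imp_price_le[of i] budget_nonneg[of i f] assms final_pos
    by (force simp: active_set_def exiting_set_def)
  moreover have "forfeited i f = 0" using final_forfeited_zero[of i i] assms by simp
  ultimately show ?thesis by (simp add: forfeited_def)
qed

text \<open>A bidder that has lost budget was the least exiting bidder at some earlier time; every
  bidder exiting at the end was exiting then as well.\<close>

lemma forfeited_zero_unless_least_exiting:
  assumes j: "j \<in> E f" and "j \<noteq> Min (E f)"
  shows "forfeited j f = 0"
proof (rule ccontr)
  assume "forfeited j f \<noteq> 0"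
  have jn: "j < n" "v j = p f" using j by (auto simp: exiting_set_def)
  have "\<exists>u. 0 < u \<and> u < f \<and> E u \<noteq> {} \<and> j = Min (E u)"
  proof (rule ccontr)
    assume never: "\<not> ?thesis"
    have "forfeited j f = forfeited j 0"
    proof (rule right_DERIV_zero_imp_const[OF _ continuous_on_forfeited])
      fix u assume "0 < u" "u < f"
      then show "(forfeited j has_real_derivative 0) (at_right u)"
        using has_forfeit_rate[of u j] never jn by auto
    qed (use jn final_pos in auto)
    then show False using \<open>forfeited j f \<noteq> 0\<close> initial[of j] jn by (simp add: forfeited_def)
  qed
  then obtain u where u: "0 < u" "u < f" "E u \<noteq> {}" "j = Min (E u)" by blast
  then have "v j = p u" using Min_exiting_in[of u] by (auto simp: exiting_set_def)
  define k where "k = Min (E f)"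
  have k: "k \<in> E f" "k \<le> j"
    unfolding k_def using j finite_exiting[of f] by (auto intro: Min_exiting_in)
  then have "k < n" "v k = p u" "0 < b k f" using \<open>v j = p u\<close> jn by (auto simp: exiting_set_def)
  moreover have "b k f \<le> b k u" using budget_antimono[of k u f] \<open>k < n\<close> u by simp
  ultimately have "k \<in> E u" by (auto simp: exiting_set_def)
  then have "j \<le> k" using u finite_exiting by simp
  then show False using k assms(2) by (simp add: k_def)
qed

lemma exiting_winner_others_fit:
  assumes s: "s \<in> E f" "0 < x s f"
  shows "(\<Sum>k\<in>E f - {s}. b k f / p f) \<le> S f - (\<Sum>k\<in>A f. b k f / p f)"
proof -
  have sn: "s < n" using s by (simp add: exiting_set_def)
  have pf: "0 < p f" by (rule final_price_pos)
  have "(\<Sum>k\<in>A f. b k f / p f) + (\<Sum>k\<in>E f - {s}. b k f / p f) = (\<Sum>k\<in>A f \<union> (E f - {s}). b k f / p f)"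
    by (intro sum.union_disjoint[symmetric]) (auto simp: active_set_def exiting_set_def)
  also have "\<dots> \<le> (\<Sum>k\<in>{..<n} - {s}. b k f / p f)"
  proof (rule sum_mono2)
    show "A f \<union> (E f - {s}) \<subseteq> {..<n} - {s}" using s by (auto simp: active_set_def exiting_set_def)
    fix k assume "k \<in> {..<n} - {s} - (A f \<union> (E f - {s}))"
    then show "0 \<le> b k f / p f" using budget_nonneg[of k f] pf final_pos by simp
  qed simp
  also have "\<dots> = (\<Sum>k\<in>{..<n} - {s}. b k f) / p f" by (simp add: sum_divide_distrib)
  also have "\<dots> \<le> S f"
    using alloc_pos_imp_others_excess_nonpos[OF sn _ order_refl s(2)] pf final_pos
    by (simp add: others_excess_def divide_le_eq mult.commute)
  finally show ?thesis by simp
qed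

text \<open>The bidder \<open>s\<close> is the one to be served last when the remainder is split.\<close>

lemma exists_last_exiting_bidder:
  obtains s where "\<And>j. j \<in> E f \<Longrightarrow> j \<noteq> s \<Longrightarrow> forfeited j f = 0"
    "(\<exists>j\<in>E f. 0 < x j f) \<Longrightarrow> (\<Sum>j\<in>E f - {s}. b j f / p f) \<le> S f - (\<Sum>k\<in>A f. b k f / p f)"
proof (cases "\<exists>j\<in>E f. 0 < x j f")
  case True
  then obtain s where s: "s \<in> E f" "0 < x s f" by blast
  show ?thesis
  proof (rule that[of s])
    fix j assume "j \<in> E f" "j \<noteq> s"
    then show "forfeited j f = 0"
      using final_forfeited_zero[of s j] s by (auto simp: exiting_set_def)
  qed (use exiting_winner_others_fit[OF s] in simp)
next
  case False
  show ?thesis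
    by (rule that[of "Min (E f)"]) (use forfeited_zero_unless_least_exiting False in auto)
qed

lemma unsaturated_winner_exiting:
  assumes "\<forall>j. j \<notin> E f \<longrightarrow> r j = 0" "i \<in> unsaturated_winners n v B p b x P f r"
  shows "i \<in> E f" "0 < x i f + r i" "p f * r i < forfeited i f + b i f"
proof -
  have i: "i < n" "0 < final_alloc n v p b x f r i" "final_pay n v p b P f r i < B i"
    using assms(2) by (auto simp: unsaturated_winners_def)
  have "i \<notin> A f" using active_pays_budget[of i r] i(3) by auto
  show "i \<in> E f"
  proof (rule ccontr)
    assume "i \<notin> E f"
    then have "r i = 0" using assms(1) by blast
    then show False
      using inactive_winner_pays_budget[of i] i \<open>i \<notin> A f\<close> \<open>i \<notin> E f\<close>
      by (simp add: final_alloc_def final_pay_def)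
  qed
  show "0 < x i f + r i" using i(2) \<open>i \<notin> A f\<close> by (simp add: final_alloc_def)
  show "p f * r i < forfeited i f + b i f"
    using i(3) \<open>i \<notin> A f\<close> by (simp add: final_pay_def forfeited_def)
qed

lemma exists_good_split:
  "\<exists>r. remainder_split n v p b x f r \<and> card (unsaturated_winners n v B p b x P f r) \<le> 1"
proof -
  define cc where "cc = (\<lambda>k. b k f / p f)"
  define R where "R = S f - sum cc (A f)"
  let ?U = "unsaturated_winners n v B p b x P f"
  have pf: "0 < p f" by (rule final_price_pos)
  have cc_nonneg: "0 \<le> cc k" if "k \<in> E f" for k
    using budget_nonneg[of k f] pf that final_pos by (simp add: cc_def exiting_set_def)
  have "0 \<le> R" "R \<le> sum cc (E f)"
    using final_active_demand_le_supply final_supply_le_demand by (simp_all add: R_def cc_def)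
  obtain s where s_forfeit: "\<And>j. j \<in> E f \<Longrightarrow> j \<noteq> s \<Longrightarrow> forfeited j f = 0"
    and s_fit: "(\<exists>j\<in>E f. 0 < x j f) \<Longrightarrow> sum cc (E f - {s}) \<le> R"
    using exists_last_exiting_bidder unfolding R_def cc_def by blast
  obtain r where r_nonneg: "\<And>j. 0 \<le> r j" and r_out: "\<And>j. j \<notin> E f \<Longrightarrow> r j = 0"
    and r_le: "\<And>j. j \<in> E f \<Longrightarrow> r j \<le> cc j" and r_sum: "sum r (E f) = R"
    and r_partial: "\<And>j k. \<lbrakk>j \<in> E f; k \<in> E f; 0 < r j; r j < cc j; 0 < r k; r k < cc k\<rbrakk> \<Longrightarrow> j = k"
    and r_last: "0 < r s \<Longrightarrow> \<forall>j\<in>E f - {s}. r j = cc j"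
    and r_fit: "sum cc (E f - {s}) \<le> R \<Longrightarrow> \<forall>j\<in>E f - {s}. r j = cc j"
    using greedy_fill_last[OF finite_exiting cc_nonneg \<open>0 \<le> R\<close> \<open>R \<le> sum cc (E f)\<close>, of s] by blast
  have "remainder_split n v p b x f r"
    unfolding remainder_split_def
    using r_nonneg r_out r_le r_sum pf by (simp add: R_def cc_def pos_le_divide_eq mult.commute)
  have partial: "0 < r i \<and> r i < cc i" if "i \<in> ?U r" "i \<noteq> s" for i
  proof -
    have i: "i \<in> E f" "0 < x i f + r i" "p f * r i < forfeited i f + b i f"
      using unsaturated_winner_exiting[OF _ that(1)] r_out by blast+
    then have "r i < cc i" using s_forfeit[OF i(1) that(2)] pf by (simp add: cc_def pos_less_divide_eq mult.commute)
    moreover have "\<not> 0 < x i f" using r_fit s_fit i(1) that(2) calculation by force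
    ultimately show ?thesis using i alloc_nonneg[of i f] final_pos by (simp add: exiting_set_def)
  qed
  have others_full: "\<forall>j\<in>E f - {s}. r j = cc j" if "s \<in> ?U r"
  proof (cases "0 < r s")
    case False
    then have "s \<in> E f" "0 < x s f"
      using unsaturated_winner_exiting[OF _ that] r_out r_nonneg[of s] by auto
    then show ?thesis using r_fit s_fit by blast
  qed (use r_last in blast)
  have winner_exiting: "i \<in> E f" if "i \<in> ?U r" for i
    using unsaturated_winner_exiting(1)[OF _ that] r_out by blast
  have not_both: False if "s \<in> ?U r" "j \<in> ?U r" "j \<noteq> s" for j
    using partial[OF that(2,3)] others_full[OF that(1)] winner_exiting[OF that(2)] that(3) by simp
  have "i = k" if "i \<in> ?U r" "k \<in> ?U r" for i k
  proof (cases "i = s \<or> k = s")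
    case True
    then show ?thesis using not_both[of k] not_both[of i] that by auto
  next
    case False
    then have "0 < r i" "r i < cc i" "0 < r k" "r k < cc k" using partial that by auto
    then show ?thesis using r_partial winner_exiting that by blast
  qed
  moreover have "finite (?U r)" by (simp add: unsaturated_winners_def)
  ultimately have "card (?U r) \<le> Suc 0" by (subst card_le_Suc0_iff_eq) blast+
  with \<open>remainder_split n v p b x f r\<close> show ?thesis by auto
qed

end

lemma split_at_time_zero:
  assumes "n \<ge> 1" "\<And>i. i < n \<Longrightarrow> 0 \<le> v i" "\<And>i. i < n \<Longrightarrow> 0 < B i"
    and run: "clinching_run n v B p b x P 0"
  shows "\<exists>r. remainder_split n v p b x 0 r \<and> card (unsaturated_winners n v B p b x P 0 r) \<le> 1"
proof -
  have p0: "p 0 = 0" and init: "\<And>i. i < n \<Longrightarrow> x i 0 = 0 \<and> P i 0 = 0 \<and> b i 0 = B i"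
    and stop: "stop_cond n v p b x 0"
    using run unfolding clinching_run_def by auto
  have A0: "active_set n v p b 0 = {}"
  proof (rule ccontr)
    assume "active_set n v p b 0 \<noteq> {}"
    then obtain j where j: "j \<in> active_set n v p b 0" by blast
    then have "(\<Sum>k\<in>active_set n v p b 0. demand (b k 0) 0) = \<infinity>"
      by (intro sum_demand_zero_price_infinite) (auto simp: active_set_def)
    then show False using stop p0 unfolding stop_cond_def by simp
  qed
  have E0: "exiting_set n v p b 0 = {..<n}"
  proof (intro set_eqI iffI)
    fix j assume "j \<in> {..<n}"
    then have j: "j < n" "0 < b j 0" using init assms(3) by auto
    then have "v j = 0" using A0 p0 assms(2)[of j] by (force simp: active_set_def)
    then show "j \<in> exiting_set n v p b 0" using j p0 by (simp add: exiting_set_def)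
  qed (auto simp: exiting_set_def)
  have S0: "remaining_supply n x 0 = 1" using init by (simp add: remaining_supply_def)
  define r :: "nat \<Rightarrow> real" where "r j = (if j = 0 then 1 else 0)" for j
  have "(\<Sum>j<n. r j) = 1" using assms(1) by (simp add: r_def)
  then have "remainder_split n v p b x 0 r"
    unfolding remainder_split_def A0 E0 S0 p0 using assms(1) init assms(3)
    by (simp add: r_def less_imp_le)
  moreover have "unsaturated_winners n v B p b x P 0 r \<subseteq> {0}"
    using A0 init by (auto simp: unsaturated_winners_def final_alloc_def r_def split: if_splits)
  then have "card (unsaturated_winners n v B p b x P 0 r) \<le> card {0::nat}" by (intro card_mono) auto
  ultimately show ?thesis by auto
qed

theorem lemma5:
  fixes n :: nat and v B :: "nat \<Rightarrow> real" and p :: "real \<Rightarrow> real"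
    and b x P :: "nat \<Rightarrow> real \<Rightarrow> real" and f :: real
  assumes "n \<ge> 1"
    and "\<And>i. i < n \<Longrightarrow> v i \<ge> 0"
    and "\<And>i. i < n \<Longrightarrow> B i > 0"
    and "clinching_run n v B p b x P f"
  shows "\<exists>r :: nat \<Rightarrow> real.
           (\<forall>j. r j \<ge> 0) \<and>
           (\<forall>j. j \<notin> exiting_set n v p b f \<longrightarrow> r j = 0) \<and>
           (\<forall>j\<in>exiting_set n v p b f. p f * r j \<le> b j f) \<and>
           (\<Sum>j\<in>exiting_set n v p b f. r j)
              = remaining_supply n x f - (\<Sum>i\<in>active_set n v p b f. b i f / p f) \<and>
           card {i. i < n \<and> final_alloc n v p b x f r i > 0
                          \<and> final_pay n v p b P f r i < B i} \<le> 1"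
proof -
  have "\<exists>r. remainder_split n v p b x f r \<and> card (unsaturated_winners n v B p b x P f r) \<le> 1"
  proof (cases "f = 0")
    case True
    then show ?thesis using split_at_time_zero assms by blast
  next
    case False
    have "0 \<le> f" using assms(4) unfolding clinching_run_def by (rule conjunct1)
    interpret clinching_final n v B p b x P f
    proof
      show "0 < f" using False \<open>0 \<le> f\<close> by simp
    qed (use assms(3,4) \<open>0 \<le> f\<close> active_set_nonempty_before_stop[OF assms(3,4)] in auto)
    show ?thesis by (rule exists_good_split)
  qed
  then show ?thesis unfolding remainder_split_def unsaturated_winners_def by blast
qed

end
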